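(* Let $\theta>0$ be a real number. For integers $N\ge 1$ and $r\ge 0$, let \[ W_N(r)=\sum_{\pi \in \mathfrak{S}_N \text{ $r$-winnable}} \theta^{\pi^{-1}(N)-1}. \] Then for all $N\ge 2$ and $r\ge 0$, \[ W_{N}(r) = (N-1)\, W_{N-1}(r) + r\,(N-2)!\,\theta^{N-1}, \] with initial conditions $W_1(0)=1$ and $W_1(r)=0$ for all $r\ge 1$.
   Context: $\mathfrak{S}_N$ is the set of permutations $\pi=[\pi_1\pi_2\cdots\pi_N]$ of $\{1,\dots,N\}$ in one-line notation; $\pi^{-1}(N)$ is the position of the entry $N$. A left-to-right maximum of $\pi$ is an entry $\pi_j$ larger than every $\pi_i$ with $i<j$. For $r\ge 0$, the $r$-positional strategy rejects $\pi_1,\dots,\pi_r$ and then accepts the first subsequent left-to-right maximum (so for $r=0$ it accepts $\pi_1$). The permutation $\pi$ is called $r$-winnable if this strategy accepts the entry $N$. *)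

theory Defs
  imports Complex_Main "HOL-Combinatorics.Permutations"
begin

text \<open>A permutation of {1..N} in one-line notation is a function p with
  p permutes {1..N}; the entry at position i is p i, and the position of the
  entry N is inv p N.\<close>

definition ltr_max :: "(nat \<Rightarrow> nat) \<Rightarrow> nat \<Rightarrow> bool" where
  "ltr_max p j \<longleftrightarrow> (\<forall>i. 1 \<le> i \<and> i < j \<longrightarrow> p i < p j)"

definition winnable :: "nat \<Rightarrow> nat \<Rightarrow> (nat \<Rightarrow> nat) \<Rightarrow> bool" where
  "winnable N r p \<longleftrightarrow>
     (\<exists>j. r < j \<and> j \<le> N \<and> ltr_max p j
          \<and> (\<forall>k. r < k \<and> k < j \<longrightarrow> \<not> ltr_max p k)
          \<and> p j = N)"

definition W :: "real \<Rightarrow> nat \<Rightarrow> nat \<Rightarrow> real" where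
  "W \<theta> N r = (\<Sum>p \<in> {p. p permutes {1..N} \<and> winnable N r p}. \<theta> ^ (inv p N - 1))"

end

(* Split the permutations of {1..N} according to whether the last entry is N.
   If it is not, delete the last entry a and relabel the others to obtain a permutation q of
   {1..N-1}; conversely (a, q) is recovered by appending a and raising the entries >= a. This
   relabelling is order preserving on the first N-1 positions, so it preserves the
   left-to-right maxima, r-winnability and the position of the maximum: these permutations
   contribute (N-1) W_(N-1)(r). If the last entry is N, its weight is theta^(N-1), and the
   strategy accepts N iff no left-to-right maximum occurs among positions r+1..N-1, i.e. iff
   N-1 occupies one of the first r positions: there are r (N-2)! such permutations. *)

theory Submission
  imports Defs
begin

lemma finite_permutes_Collect:
  "finite A \<Longrightarrow> finite {p. p permutes A \<and> P p}"
  by (rule rev_finite_subset[OF finite_permutations]) auto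

lemma permutes_insert_fixpoint_iff:
  assumes "a \<notin> A"
  shows "p permutes insert a A \<and> p a = a \<longleftrightarrow> p permutes A"
proof
  assume "p permutes insert a A \<and> p a = a"
  then show "p permutes A" using permutes_superset[of p "insert a A" A] by auto
next
  assume p: "p permutes A"
  then have "p permutes insert a A" by (rule permutes_subset) blast
  moreover have "p a = a" using permutes_not_in[OF p assms] .
  ultimately show "p permutes insert a A \<and> p a = a" ..
qed

lemma card_permutes_mapping:
  assumes "finite A" "a \<in> A" "b \<in> A"
  shows "card {p. p permutes A \<and> p a = b} = fact (card A - 1)"
proof -
  let ?t = "(\<circ>) (transpose a b)"
  have "bij_betw ?t {p. p permutes A \<and> p a = b} {q. q permutes (A - {a})}"
  proof (rule bij_betw_byWitness[where f' = ?t])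
    show "?t ` {p. p permutes A \<and> p a = b} \<subseteq> {q. q permutes (A - {a})}"
    proof (rule image_subsetI)
      fix p assume "p \<in> {p. p permutes A \<and> p a = b}"
      then show "?t p \<in> {q. q permutes (A - {a})}"
        using permutes_insert_lemma[of p a "A - {a}"] assms(2) by (auto simp: insert_absorb)
    qed
    show "?t ` {q. q permutes (A - {a})} \<subseteq> {p. p permutes A \<and> p a = b}"
    proof (rule image_subsetI)
      fix q assume "q \<in> {q. q permutes (A - {a})}"
      then have q: "q permutes (A - {a})" by simp
      then have "q permutes A" by (rule permutes_subset) blast
      then have "?t q permutes A" by (rule permutes_compose[OF _ permutes_swap_id[OF assms(2,3)]])
      moreover have "?t q a = b" using permutes_not_in[OF q] by simp
      ultimately show "?t q \<in> {p. p permutes A \<and> p a = b}" by simp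
    qed
  qed (simp_all add: fun_eq_iff)
  then have "card {p. p permutes A \<and> p a = b} = card {q. q permutes (A - {a})}"
    by (rule bij_betw_same_card)
  also have "\<dots> = fact (card A - 1)"
    using assms by (intro card_permutations) auto
  finally show ?thesis .
qed

definition append_entry :: "nat \<Rightarrow> nat \<Rightarrow> (nat \<Rightarrow> nat) \<Rightarrow> nat \<Rightarrow> nat" where
  "append_entry M a q i =
     (if i = Suc M then a else if i \<in> {1..M} then (if a \<le> q i then Suc (q i) else q i) else i)"

definition drop_last_entry :: "nat \<Rightarrow> (nat \<Rightarrow> nat) \<Rightarrow> nat \<Rightarrow> nat" where
  "drop_last_entry M p i = (if i \<in> {1..M} then (if p (Suc M) < p i then p i - 1 else p i) else i)"

lemma append_entry_less_iff:
  assumes "i \<in> {1..M}" "j \<in> {1..M}"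
  shows "append_entry M a q i < append_entry M a q j \<longleftrightarrow> q i < q j"
  using assms by (auto simp: append_entry_def)

lemma ltr_max_append_entry:
  assumes "j \<in> {1..M}"
  shows "ltr_max (append_entry M a q) j \<longleftrightarrow> ltr_max q j"
  using assms append_entry_less_iff[of _ M j a q] unfolding ltr_max_def by auto

lemma append_entry_permutes:
  assumes q: "q permutes {1..M}" and a: "a \<in> {1..M}"
  shows "append_entry M a q permutes {1..Suc M}"
proof -
  let ?p = "append_entry M a q"
  have q_in: "q i \<in> {1..M}" if "i \<in> {1..M}" for i
    using permutes_in_image[OF q] that by blast
  have img: "?p ` {1..Suc M} \<subseteq> {1..Suc M}"
  proof (rule image_subsetI)
    fix i assume "i \<in> {1..Suc M}"
    then show "?p i \<in> {1..Suc M}" using a q_in[of i] by (auto simp: append_entry_def)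
  qed
  have inj: "inj_on ?p {1..Suc M}"
  proof (rule inj_onI)
    fix i j assume i: "i \<in> {1..Suc M}" and j: "j \<in> {1..Suc M}" and eq: "?p i = ?p j"
    have last_new: "?p k \<noteq> ?p (Suc M)" if "k \<in> {1..M}" for k
      using that by (auto simp: append_entry_def)
    show "i = j"
    proof (cases "i = Suc M \<or> j = Suc M")
      case True
      then show ?thesis using i j eq last_new by fastforce
    next
      case False
      then have "i \<in> {1..M}" "j \<in> {1..M}" using i j by auto
      then have "q i = q j"
        using eq append_entry_less_iff[of i M j a q] append_entry_less_iff[of j M i a q] by auto
      then show ?thesis using permutes_inj[OF q] by (simp add: inj_eq)
    qed
  qed
  have "bij_betw ?p {1..Suc M} {1..Suc M}"
    unfolding bij_betw_def using endo_inj_surj[OF finite_atLeastAtMost img inj] inj by blast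
  moreover have "?p i = i" if "i \<notin> {1..Suc M}" for i
    using that by (auto simp: append_entry_def)
  ultimately show ?thesis by (rule bij_imp_permutes)
qed

lemma append_entry_eq_top_iff:
  assumes q: "q permutes {1..M}" and a: "a \<in> {1..M}" and j: "j \<in> {1..Suc M}"
  shows "append_entry M a q j = Suc M \<longleftrightarrow> j \<in> {1..M} \<and> q j = M"
  using a j permutes_in_image[OF q, of j] by (auto simp: append_entry_def)

lemma winnable_append_entry:
  assumes q: "q permutes {1..M}" and a: "a \<in> {1..M}"
  shows "winnable (Suc M) r (append_entry M a q) \<longleftrightarrow> winnable M r q"
proof -
  let ?p = "append_entry M a q"
  have "(r < j \<and> j \<le> Suc M \<and> ltr_max ?p j \<and> (\<forall>k. r < k \<and> k < j \<longrightarrow> \<not> ltr_max ?p k)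
          \<and> ?p j = Suc M)
    \<longleftrightarrow> (r < j \<and> j \<le> M \<and> ltr_max q j \<and> (\<forall>k. r < k \<and> k < j \<longrightarrow> \<not> ltr_max q k)
          \<and> q j = M)" for j
    using append_entry_eq_top_iff[OF q a, of j] ltr_max_append_entry[of _ M a q] by auto
  then show ?thesis unfolding winnable_def by presburger
qed

lemma inv_append_entry_top:
  assumes q: "q permutes {1..M}" and a: "a \<in> {1..M}"
  shows "inv (append_entry M a q) (Suc M) = inv q M"
proof -
  have "q (inv q M) = M" using permutes_inverses[OF q] by simp
  moreover have "inv q M \<in> {1..M}"
    using a permutes_in_image[OF permutes_inv[OF q]] by auto
  ultimately have "append_entry M a q (inv q M) = Suc M"
    using append_entry_eq_top_iff[OF q a] by auto
  then show ?thesis using permutes_inv_eq[OF append_entry_permutes[OF q a]] by blast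
qed

lemma append_entry_inject:
  assumes "q permutes {1..M}" "q' permutes {1..M}"
    and "append_entry M a q = append_entry M a' q'"
  shows "a = a' \<and> q = q'"
proof -
  have "a = a'" using fun_cong[OF assms(3), of "Suc M"] by (simp add: append_entry_def)
  moreover have "q i = q' i" for i
  proof (cases "i \<in> {1..M}")
    case True
    then show ?thesis
      using fun_cong[OF assms(3), of i] \<open>a = a'\<close> by (auto simp: append_entry_def split: if_splits)
  next
    case False
    then show ?thesis using permutes_not_in assms(1,2) by metis
  qed
  ultimately show ?thesis by auto
qed

lemma
  assumes p: "p permutes {1..Suc M}" and last: "p (Suc M) \<noteq> Suc M"
  shows drop_last_entry_permutes: "drop_last_entry M p permutes {1..M}"
    and append_entry_drop_last_entry: "append_entry M (p (Suc M)) (drop_last_entry M p) = p"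
proof -
  let ?a = "p (Suc M)" and ?q = "drop_last_entry M p"
  have p_in: "p i \<in> {1..Suc M}" if "i \<in> {1..Suc M}" for i
    using permutes_in_image[OF p] that by blast
  have p_eq: "p i = p j \<longleftrightarrow> i = j" for i j
    using permutes_inj[OF p] by (simp add: inj_eq)
  have a: "?a \<in> {1..M}" using p_in[of "Suc M"] last by auto
  have img: "?q ` {1..M} \<subseteq> {1..M}"
  proof (rule image_subsetI)
    fix i assume "i \<in> {1..M}"
    then show "?q i \<in> {1..M}"
      using a p_in[of i] p_eq[of i "Suc M"] by (auto simp: drop_last_entry_def)
  qed
  have inj: "inj_on ?q {1..M}"
  proof (rule inj_onI)
    fix i j assume "i \<in> {1..M}" "j \<in> {1..M}" "?q i = ?q j"
    then have "p i = p j"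
      using p_eq[of i "Suc M"] p_eq[of j "Suc M"] by (auto simp: drop_last_entry_def split: if_splits)
    then show "i = j" using p_eq by blast
  qed
  have "bij_betw ?q {1..M} {1..M}"
    unfolding bij_betw_def using endo_inj_surj[OF finite_atLeastAtMost img inj] inj by blast
  moreover have "?q i = i" if "i \<notin> {1..M}" for i
    using that unfolding drop_last_entry_def by presburger
  ultimately show "?q permutes {1..M}" by (rule bij_imp_permutes)
  show "append_entry M ?a ?q = p"
  proof
    fix i
    consider "i = Suc M" | "i \<in> {1..M}" | "i \<notin> {1..Suc M}" by fastforce
    then show "append_entry M ?a ?q i = p i"
    proof cases
      case 2
      then show ?thesis
        using p_eq[of i "Suc M"] by (auto simp: append_entry_def drop_last_entry_def)
    next
      case 3
      then show ?thesis using permutes_not_in[OF p] by (auto simp: append_entry_def)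
    qed (simp add: append_entry_def)
  qed
qed

lemma bij_betw_append_entry:
  "bij_betw (\<lambda>(a, q). append_entry M a q)
     ({1..M} \<times> {q. q permutes {1..M} \<and> winnable M r q})
     {p. p permutes {1..Suc M} \<and> winnable (Suc M) r p \<and> p (Suc M) \<noteq> Suc M}"
  unfolding bij_betw_def
proof
  show "inj_on (\<lambda>(a, q). append_entry M a q) ({1..M} \<times> {q. q permutes {1..M} \<and> winnable M r q})"
  proof (rule inj_onI, clarify)
    fix a q a' q'
    assume "q permutes {1..M}" "q' permutes {1..M}" "append_entry M a q = append_entry M a' q'"
    then show "a = a' \<and> q = q'" by (rule append_entry_inject)
  qed
  show "(\<lambda>(a, q). append_entry M a q) ` ({1..M} \<times> {q. q permutes {1..M} \<and> winnable M r q})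
    = {p. p permutes {1..Suc M} \<and> winnable (Suc M) r p \<and> p (Suc M) \<noteq> Suc M}"
  proof (intro equalityI subsetI)
    fix p assume "p \<in> (\<lambda>(a, q). append_entry M a q) ` ({1..M} \<times> {q. q permutes {1..M} \<and> winnable M r q})"
    then obtain a q where "a \<in> {1..M}" "q permutes {1..M}" "winnable M r q" "p = append_entry M a q"
      by auto
    then show "p \<in> {p. p permutes {1..Suc M} \<and> winnable (Suc M) r p \<and> p (Suc M) \<noteq> Suc M}"
      using append_entry_permutes winnable_append_entry by (auto simp: append_entry_def)
  next
    fix p assume "p \<in> {p. p permutes {1..Suc M} \<and> winnable (Suc M) r p \<and> p (Suc M) \<noteq> Suc M}"
    then have p: "p permutes {1..Suc M}" "winnable (Suc M) r p" "p (Suc M) \<noteq> Suc M" by auto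
    have "p (Suc M) \<in> {1..M}" using permutes_in_image[OF p(1), of "Suc M"] p(3) by auto
    moreover note drop_last_entry_permutes[OF p(1,3)] append_entry_drop_last_entry[OF p(1,3)]
    ultimately show "p \<in> (\<lambda>(a, q). append_entry M a q) ` ({1..M} \<times> {q. q permutes {1..M} \<and> winnable M r q})"
      using winnable_append_entry p(2) by (metis (mono_tags, lifting) SigmaI image_eqI mem_Collect_eq case_prod_conv)
  qed
qed

lemma sum_weight_last_not_top:
  fixes \<theta> :: real
  shows "(\<Sum>p \<in> {p. p permutes {1..Suc M} \<and> winnable (Suc M) r p \<and> p (Suc M) \<noteq> Suc M}.
      \<theta> ^ (inv p (Suc M) - 1)) = real M * W \<theta> M r"
proof -
  let ?B = "{q. q permutes {1..M} \<and> winnable M r q}"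
  have "(\<Sum>p \<in> {p. p permutes {1..Suc M} \<and> winnable (Suc M) r p \<and> p (Suc M) \<noteq> Suc M}.
          \<theta> ^ (inv p (Suc M) - 1))
      = (\<Sum>(a, q) \<in> {1..M} \<times> ?B. \<theta> ^ (inv (append_entry M a q) (Suc M) - 1))"
    using sum.reindex_bij_betw[OF bij_betw_append_entry, of "\<lambda>p. \<theta> ^ (inv p (Suc M) - 1)"]
    by (simp add: case_prod_unfold)
  also have "\<dots> = (\<Sum>(a, q) \<in> {1..M} \<times> ?B. \<theta> ^ (inv q M - 1))"
    by (rule sum.cong) (auto simp: inv_append_entry_top)
  also have "\<dots> = real M * W \<theta> M r"
    by (simp add: sum.cartesian_product[symmetric] W_def)
  finally show ?thesis .
qed

lemma winnable_Suc_fixing_top_iff: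
  assumes p: "p permutes {1..M}" and "1 \<le> M" "r \<le> M"
  shows "winnable (Suc M) r p \<longleftrightarrow> inv p M \<le> r"
proof -
  define m where "m = inv p M"
  have pm: "p m = M" unfolding m_def using permutes_inverses(1)[OF p] .
  have m: "m \<in> {1..M}" unfolding m_def using assms(2) permutes_in_image[OF permutes_inv[OF p]] by simp
  have below_M: "p i \<le> M" if "i \<in> {1..M}" for i
    using permutes_in_image[OF p, of i] that by auto
  have eq_M: "p i = M \<longleftrightarrow> i = m" for i
    using permutes_inj[OF p] pm by (auto simp: inj_eq)
  have top: "p (Suc M) = Suc M" using permutes_not_in[OF p] by simp
  have top_ltr_max: "ltr_max p (Suc M)"
    unfolding ltr_max_def using below_M top by (simp add: less_Suc_eq_le)
  have m_ltr_max: "ltr_max p m"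
    unfolding ltr_max_def
  proof (intro allI impI)
    fix i assume "1 \<le> i \<and> i < m"
    then show "p i < p m" using below_M[of i] eq_M[of i] pm m by auto
  qed
  show ?thesis
  proof
    assume "winnable (Suc M) r p"
    then obtain j where j: "r < j" "j \<le> Suc M" "p j = Suc M"
        and first: "\<forall>k. r < k \<and> k < j \<longrightarrow> \<not> ltr_max p k"
      unfolding winnable_def by blast
    have "j = Suc M" using j below_M[of j] by (cases "j = Suc M") auto
    have "m \<le> r"
    proof (rule ccontr)
      assume "\<not> m \<le> r"
      then show False using first \<open>j = Suc M\<close> m m_ltr_max by auto
    qed
    then show "inv p M \<le> r" by (simp add: m_def)
  next
    assume "inv p M \<le> r"
    then have "\<not> ltr_max p k" if "r < k" "k < Suc M" for k
      using that m below_M[of k] pm unfolding ltr_max_def m_def[symmetric] by force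
    then show "winnable (Suc M) r p"
      unfolding winnable_def using assms(3) top top_ltr_max by (intro exI[of _ "Suc M"]) auto
  qed
qed

lemma card_permutes_inv_le:
  assumes "1 \<le> M" "r \<le> M"
  shows "card {p. p permutes {1..M} \<and> inv p M \<le> r} = r * fact (M - 1)"
proof -
  have "{p. p permutes {1..M} \<and> inv p M \<le> r} = (\<Union>m \<in> {1..r}. {p. p permutes {1..M} \<and> p m = M})"
  proof (intro equalityI subsetI)
    fix p assume "p \<in> {p. p permutes {1..M} \<and> inv p M \<le> r}"
    moreover have "inv p M \<in> {1..M}" if "p permutes {1..M}"
      using that assms(1) permutes_in_image[OF permutes_inv] by fastforce
    ultimately show "p \<in> (\<Union>m \<in> {1..r}. {p. p permutes {1..M} \<and> p m = M})"
      using permutes_inverses(1) by fastforce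
  next
    fix p assume "p \<in> (\<Union>m \<in> {1..r}. {p. p permutes {1..M} \<and> p m = M})"
    then obtain m where "m \<in> {1..r}" "p permutes {1..M}" "p m = M" by blast
    then show "p \<in> {p. p permutes {1..M} \<and> inv p M \<le> r}"
      using permutes_inv_eq[of p "{1..M}" M m] by simp
  qed
  also have "card \<dots> = (\<Sum>m \<in> {1..r}. card {p. p permutes {1..M} \<and> p m = M})"
  proof (rule card_UN_disjoint)
    show "\<forall>m \<in> {1..r}. \<forall>m' \<in> {1..r}. m \<noteq> m' \<longrightarrow>
        {p. p permutes {1..M} \<and> p m = M} \<inter> {p. p permutes {1..M} \<and> p m' = M} = {}"
      using permutes_inj by (fastforce dest: injD)
  qed (auto simp: finite_permutes_Collect)
  also have "\<dots> = (\<Sum>m \<in> {1..r}. fact (M - 1))"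
  proof (rule sum.cong[OF refl])
    fix m assume "m \<in> {1..r}"
    then show "card {p. p permutes {1..M} \<and> p m = M} = fact (M - 1)"
      using assms card_permutes_mapping[of "{1..M}" m M] by simp
  qed
  finally show ?thesis by simp
qed

lemma sum_weight_last_top:
  fixes \<theta> :: real
  assumes "1 \<le> M" "r \<le> M"
  shows "(\<Sum>p \<in> {p. p permutes {1..Suc M} \<and> winnable (Suc M) r p \<and> p (Suc M) = Suc M}.
            \<theta> ^ (inv p (Suc M) - 1)) = real r * fact (M - 1) * \<theta> ^ M"
proof -
  have fix_top: "p permutes {1..Suc M} \<and> p (Suc M) = Suc M \<longleftrightarrow> p permutes {1..M}" for p
    using permutes_insert_fixpoint_iff[of "Suc M" "{1..M}" p] by (simp add: atLeastAtMostSuc_conv)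
  have "{p. p permutes {1..Suc M} \<and> winnable (Suc M) r p \<and> p (Suc M) = Suc M}
      = {p. p permutes {1..M} \<and> inv p M \<le> r}"
    using fix_top winnable_Suc_fixing_top_iff[OF _ assms] by blast
  moreover have "inv p (Suc M) = Suc M" if "p permutes {1..M}" for p
    using permutes_not_in[OF permutes_inv[OF that]] by simp
  ultimately show ?thesis
    using card_permutes_inv_le[OF assms] by (simp add: of_nat_fact)
qed

lemma W_Suc:
  fixes \<theta> :: real
  assumes "1 \<le> M" "r \<le> M"
  shows "W \<theta> (Suc M) r = real M * W \<theta> M r + real r * fact (M - 1) * \<theta> ^ M"
proof -
  let ?w = "\<lambda>p. \<theta> ^ (inv p (Suc M) - 1)"
  let ?S = "{p. p permutes {1..Suc M} \<and> winnable (Suc M) r p}"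
  have "W \<theta> (Suc M) r = (\<Sum>p \<in> {p \<in> ?S. p (Suc M) \<noteq> Suc M}. ?w p) + (\<Sum>p \<in> {p \<in> ?S. p (Suc M) = Suc M}. ?w p)"
    unfolding W_def
    by (subst sum.union_disjoint[symmetric]) (auto simp: finite_permutes_Collect intro: sum.cong)
  then show ?thesis
    using sum_weight_last_not_top sum_weight_last_top[OF assms] by simp
qed

theorem theorem2p1:
  fixes \<theta> :: real
  assumes "\<theta> > 0"
  shows "(\<forall>N r. 2 \<le> N \<and> r < N \<longrightarrow>
            W \<theta> N r = real (N - 1) * W \<theta> (N - 1) r + real r * fact (N - 2) * \<theta> ^ (N - 1))
         \<and> W \<theta> 1 0 = 1 \<and> (\<forall>r \<ge> 1. W \<theta> 1 r = 0)"
proof (intro conjI allI impI)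
  (* The identities hold for every real theta. *)
  fix N r :: nat assume N: "2 \<le> N \<and> r < N"
  define M where "M = N - 1"
  have "N = Suc M" "1 \<le> M" "r \<le> M" using N by (auto simp: M_def)
  then show "W \<theta> N r = real (N - 1) * W \<theta> (N - 1) r + real r * fact (N - 2) * \<theta> ^ (N - 1)"
    using W_Suc by simp
next
  have "winnable 1 0 id" unfolding winnable_def ltr_max_def by (intro exI[of _ 1]) auto
  then have "{p. p permutes {1..1::nat} \<and> winnable 1 0 p} = {id}" by auto
  then show "W \<theta> 1 0 = 1" unfolding W_def by simp
next
  fix r :: nat assume "1 \<le> r"
  then have "{p. p permutes {1..1::nat} \<and> winnable 1 r p} = {}"
    unfolding winnable_def by auto
  then show "W \<theta> 1 r = 0" unfolding W_def by simp
qed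

end
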